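(* For integers $0\le s\le n$, \[ \operatorname{Cat}_{(2n+1-s,s)}=\sum_{i=0}^s \operatorname{Mot}_{(i+n-s,\,n-s)}\binom{n}{s-i},\qquad \operatorname{Cat}_{(2n-s,s)}=\sum_{i=0}^s \operatorname{Rior}_{(i+n-s,\,n-s)}\binom{n}{s-i}. \]
   Context: The Catalan triangle numbers are $\operatorname{Cat}_{(a,b)}=\binom{a+b}{b}-\binom{a+b}{b-1}$ for $0\le b\le a$ and $0$ otherwise. A Motzkin path is a lattice path with steps $U=(1,1)$, $H=(1,0)$, $D=(1,-1)$ starting at $(0,0)$ and staying weakly above the line $y=0$. The Motzkin triangle number $\operatorname{Mot}_{(a,k)}$ is the number of Motzkin paths from $(0,0)$ to $(a,k)$ (so $\operatorname{Mot}_{(a,a)}=1$ and $\operatorname{Mot}_{(a,0)}$ is the $a$-th Motzkin number). The Riordan triangle number $\operatorname{Rior}_{(a,k)}$ is the number of Motzkin paths from $(0,0)$ to $(a,k)$ having no $H$ step on the line $y=0$ (so $\operatorname{Rior}_{(a,a)}=1$, $\operatorname{Rior}_{(1,0)}=0$). *)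

theory Defs
  imports Main
begin

definition Cat :: "nat \<Rightarrow> nat \<Rightarrow> int" where
  "Cat a b = (if b \<le> a then
      int ((a + b) choose b) - (if b = 0 then 0 else int ((a + b) choose (b - 1)))
    else 0)"

text \<open>A lattice path is a list of steps: 1 = U, 0 = H, -1 = D.  The height after j steps is
  the sum of the first j steps.  A Motzkin path stays weakly above y = 0.\<close>
definition motzkin_paths :: "nat \<Rightarrow> int \<Rightarrow> int list set" where
  "motzkin_paths a k = {p. length p = a \<and> set p \<subseteq> {-1, 0, 1} \<and>
      (\<forall>j \<le> a. sum_list (take j p) \<ge> 0) \<and> sum_list p = k}"

definition Mot :: "nat \<Rightarrow> nat \<Rightarrow> nat" where
  "Mot a k = card (motzkin_paths a (int k))"

text \<open>Riordan: Motzkin paths with no H step on the line y = 0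
  (the j-th step, starting at height sum of first j steps, is not H at height 0).\<close>
definition Rior :: "nat \<Rightarrow> nat \<Rightarrow> nat" where
  "Rior a k = card {p \<in> motzkin_paths a (int k).
      \<forall>j < a. p ! j = 0 \<longrightarrow> sum_list (take j p) \<noteq> 0}"

end

theory Submission
  imports Defs
begin

text \<open>Appending a last step gives the row recurrences
  \<open>Mot(j+1,k) = Mot(j,k-1) + Mot(j,k) + Mot(j,k+1)\<close> and the same for \<open>Rior\<close>, except that
  the flat step is forbidden at height \<open>0\<close>. Taking binomial transforms in \<open>j\<close> adds one to the
  weight of the middle term, so both sides of each identity, viewed as functions of \<open>n\<close> and the
  height \<open>k = n - s\<close>, obey
  \<open>F(n+1,k) = F(n,k-1) + w(k) F(n,k) + F(n,k+1)\<close> with \<open>w = 2\<close>, resp. \<open>w(0) = 1\<close> and \<open>w = 2\<close>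
  otherwise. On the Catalan side this is Pascal's rule applied twice to
  \<open>C(m,r) - C(m,r-1)\<close>; the boundary at \<open>k = 0\<close> comes from the symmetry
  \<open>C(m,r) = C(m,m-r)\<close>. Both sides agree for \<open>n = 0\<close>, so they agree everywhere.\<close>

lemma motzkin_paths_finite: "finite (motzkin_paths j k)"
proof -
  have "motzkin_paths j k \<subseteq> {xs. set xs \<subseteq> {-1,0,1} \<and> length xs = j}"
    by (auto simp: motzkin_paths_def)
  moreover have "finite {xs::int list. set xs \<subseteq> {-1,0,1} \<and> length xs = j}"
    by (rule finite_lists_length_eq) simp
  ultimately show ?thesis by (rule finite_subset)
qed

lemma sum_list_le_length: "set p \<subseteq> {-1,0,1} \<Longrightarrow> sum_list p \<le> int (length p)"
  by (induction p) auto

lemma motzkin_paths_empty_if_neg: "k < 0 \<Longrightarrow> motzkin_paths j k = {}"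
  by (auto simp: motzkin_paths_def)

lemma motzkin_paths_empty_if_less: "int j < k \<Longrightarrow> motzkin_paths j k = {}"
  using sum_list_le_length by (fastforce simp: motzkin_paths_def)

lemma motzkin_paths_0: "motzkin_paths 0 k = (if k = 0 then {[]} else {})"
  by (auto simp: motzkin_paths_def)

lemma snoc_in_motzkin_paths_iff:
  "q @ [x] \<in> motzkin_paths (Suc j) k \<longleftrightarrow>
     x \<in> {-1,0,1} \<and> q \<in> motzkin_paths j (k - x) \<and> k \<ge> 0"
proof -
  have "(\<forall>i\<le>Suc j. sum_list (take i (q @ [x])) \<ge> 0) \<longleftrightarrow>
        (\<forall>i\<le>j. sum_list (take i q) \<ge> 0) \<and> sum_list q + x \<ge> 0"
    if "length q = j"
    using that by (auto simp: All_less_Suc le_Suc_eq)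
  then show ?thesis
    by (auto simp: motzkin_paths_def)
qed

lemma motzkin_paths_Suc:
  assumes "k \<ge> 0"
  shows "motzkin_paths (Suc j) k =
           (\<lambda>q. q @ [-1]) ` motzkin_paths j (k + 1) \<union> (\<lambda>q. q @ [0]) ` motzkin_paths j k
           \<union> (\<lambda>q. q @ [1]) ` motzkin_paths j (k - 1)"
proof (intro equalityI subsetI)
  fix p assume p: "p \<in> motzkin_paths (Suc j) k"
  then have "p \<noteq> []" by (auto simp: motzkin_paths_def)
  then obtain q x where "p = q @ [x]" by (cases p rule: rev_cases) auto
  with p show "p \<in> (\<lambda>q. q @ [-1]) ` motzkin_paths j (k + 1) \<union> (\<lambda>q. q @ [0]) ` motzkin_paths j k
           \<union> (\<lambda>q. q @ [1]) ` motzkin_paths j (k - 1)"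
    by (auto simp: snoc_in_motzkin_paths_iff)
qed (use assms in \<open>auto simp: snoc_in_motzkin_paths_iff\<close>)

lemma card_Un_snoc_images:
  assumes "finite A" "finite B" "finite C" "a \<noteq> b" "a \<noteq> c" "b \<noteq> c"
  shows "card ((\<lambda>q. q @ [a]) ` A \<union> (\<lambda>q. q @ [b]) ` B \<union> (\<lambda>q. q @ [c]) ` C)
           = card A + card B + card C"
proof -
  have inj: "inj_on (\<lambda>q. q @ [x]) X" for x :: 'a and X by (auto simp: inj_on_def)
  have "card ((\<lambda>q. q @ [a]) ` A \<union> (\<lambda>q. q @ [b]) ` B \<union> (\<lambda>q. q @ [c]) ` C)
          = card ((\<lambda>q. q @ [a]) ` A \<union> (\<lambda>q. q @ [b]) ` B) + card ((\<lambda>q. q @ [c]) ` C)"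
    by (rule card_Un_disjoint) (use assms in auto)
  also have "card ((\<lambda>q. q @ [a]) ` A \<union> (\<lambda>q. q @ [b]) ` B)
               = card ((\<lambda>q. q @ [a]) ` A) + card ((\<lambda>q. q @ [b]) ` B)"
    by (rule card_Un_disjoint) (use assms in auto)
  finally show ?thesis by (simp add: card_image[OF inj])
qed

lemma Mot_0: "Mot 0 k = (if k = 0 then 1 else 0)"
  by (simp add: Mot_def motzkin_paths_0)

lemma Mot_eq_0: "j < k \<Longrightarrow> Mot j k = 0"
  by (simp add: Mot_def motzkin_paths_empty_if_less)

lemma Mot_Suc: "Mot (Suc j) k = (if k = 0 then 0 else Mot j (k - 1)) + Mot j k + Mot j (Suc k)"
proof -
  have "card (motzkin_paths j (int k - 1)) = (if k = 0 then 0 else Mot j (k - 1))"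
    by (simp add: Mot_def of_nat_diff motzkin_paths_empty_if_neg)
  then show ?thesis
    by (simp add: Mot_def motzkin_paths_Suc card_Un_snoc_images motzkin_paths_finite add.commute)
qed

definition riordan_paths :: "nat \<Rightarrow> int \<Rightarrow> int list set" where
  "riordan_paths j k =
     {p \<in> motzkin_paths j k. \<forall>i < j. p ! i = 0 \<longrightarrow> sum_list (take i p) \<noteq> 0}"

lemma Rior_eq_card_riordan_paths: "Rior j k = card (riordan_paths j (int k))"
  by (simp add: Rior_def riordan_paths_def)

lemma snoc_in_riordan_paths_iff:
  "q @ [x] \<in> riordan_paths (Suc j) k \<longleftrightarrow>
     x \<in> {-1,0,1} \<and> q \<in> riordan_paths j (k - x) \<and> k \<ge> 0 \<and> (x = 0 \<longrightarrow> k \<noteq> 0)"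
proof (cases "length q = j")
  case True
  then have "(\<forall>i < Suc j. (q @ [x]) ! i = 0 \<longrightarrow> sum_list (take i (q @ [x])) \<noteq> 0) \<longleftrightarrow>
        (x = 0 \<longrightarrow> sum_list q \<noteq> 0) \<and> (\<forall>i < j. q ! i = 0 \<longrightarrow> sum_list (take i q) \<noteq> 0)"
    by (auto simp: All_less_Suc nth_append)
  then show ?thesis
    unfolding riordan_paths_def mem_Collect_eq snoc_in_motzkin_paths_iff
    by (auto simp: motzkin_paths_def)
qed (auto simp: riordan_paths_def motzkin_paths_def)

lemma riordan_paths_Suc:
  assumes "k \<ge> 0"
  shows "riordan_paths (Suc j) k =
           (\<lambda>q. q @ [-1]) ` riordan_paths j (k + 1)
           \<union> (\<lambda>q. q @ [0]) ` (if k = 0 then {} else riordan_paths j k)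
           \<union> (\<lambda>q. q @ [1]) ` riordan_paths j (k - 1)"
proof (intro equalityI subsetI)
  fix p assume p: "p \<in> riordan_paths (Suc j) k"
  then have "p \<noteq> []" by (auto simp: riordan_paths_def motzkin_paths_def)
  then obtain q x where "p = q @ [x]" by (cases p rule: rev_cases) auto
  with p show "p \<in> (\<lambda>q. q @ [-1]) ` riordan_paths j (k + 1)
           \<union> (\<lambda>q. q @ [0]) ` (if k = 0 then {} else riordan_paths j k)
           \<union> (\<lambda>q. q @ [1]) ` riordan_paths j (k - 1)"
    by (auto simp: snoc_in_riordan_paths_iff)
qed (use assms in \<open>auto simp: snoc_in_riordan_paths_iff split: if_splits\<close>)

lemma Rior_0: "Rior 0 k = (if k = 0 then 1 else 0)"
  by (simp add: Rior_eq_card_riordan_paths riordan_paths_def motzkin_paths_0)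

lemma Rior_eq_0: "j < k \<Longrightarrow> Rior j k = 0"
  by (simp add: Rior_eq_card_riordan_paths riordan_paths_def motzkin_paths_empty_if_less)

lemma Rior_Suc:
  "Rior (Suc j) k = (if k = 0 then 0 else Rior j (k - 1)) + (if k = 0 then 0 else Rior j k)
                    + Rior j (Suc k)"
proof -
  have "card (riordan_paths j (int k - 1)) = (if k = 0 then 0 else Rior j (k - 1))"
    by (simp add: Rior_eq_card_riordan_paths riordan_paths_def of_nat_diff motzkin_paths_empty_if_neg)
  moreover have "finite (riordan_paths j k)" for k
    by (simp add: riordan_paths_def motzkin_paths_finite)
  ultimately show ?thesis
    by (simp add: Rior_eq_card_riordan_paths riordan_paths_Suc card_Un_snoc_images add.commute)
qed

definition binomial_transform :: "(nat \<Rightarrow> 'a::comm_semiring_1) \<Rightarrow> nat \<Rightarrow> 'a" where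
  "binomial_transform f n = (\<Sum>j\<le>n. of_nat (n choose j) * f j)"

lemma binomial_transform_Suc:
  "binomial_transform f (Suc n) = binomial_transform f n + binomial_transform (\<lambda>j. f (Suc j)) n"
proof -
  have shift: "(\<Sum>j\<le>Suc m. of_nat (m' choose j) * f j)
                 = f 0 + (\<Sum>j\<le>m. of_nat (m' choose Suc j) * f (Suc j))" for m m'
    by (subst sum.atMost_Suc_shift) simp
  have "binomial_transform f (Suc n) = f 0 + (\<Sum>j\<le>n. of_nat (Suc n choose Suc j) * f (Suc j))"
    unfolding binomial_transform_def shift ..
  also have "\<dots> = (f 0 + (\<Sum>j\<le>n. of_nat (n choose Suc j) * f (Suc j)))
                  + binomial_transform (\<lambda>j. f (Suc j)) n"
    by (simp add: binomial_transform_def sum.distrib distrib_right add_ac)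
  also have "f 0 + (\<Sum>j\<le>n. of_nat (n choose Suc j) * f (Suc j)) = binomial_transform f n"
    unfolding binomial_transform_def shift[symmetric] by (simp add: binomial_eq_0)
  finally show ?thesis .
qed

lemma binomial_transform_row_recurrence:
  fixes f :: "nat \<Rightarrow> nat \<Rightarrow> 'a::comm_semiring_1"
  assumes "\<And>j k. f (Suc j) k = (if k = 0 then 0 else f j (k - 1)) + w k * f j k + f j (Suc k)"
  shows "binomial_transform (\<lambda>j. f j k) (Suc n) =
           (if k = 0 then 0 else binomial_transform (\<lambda>j. f j (k - 1)) n)
           + (w k + 1) * binomial_transform (\<lambda>j. f j k) n
           + binomial_transform (\<lambda>j. f j (Suc k)) n"
  unfolding binomial_transform_Suc assms
  by (simp add: binomial_transform_def sum.distrib distrib_left distrib_right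
      sum_distrib_left mult.left_commute add_ac)

lemma row_recurrence_unique:
  fixes F G :: "nat \<Rightarrow> nat \<Rightarrow> 'a::semiring_1"
  assumes "\<And>k. F 0 k = G 0 k"
    and "\<And>n k. F (Suc n) k = (if k = 0 then 0 else F n (k - 1)) + w k * F n k + F n (Suc k)"
    and "\<And>n k. G (Suc n) k = (if k = 0 then 0 else G n (k - 1)) + w k * G n k + G n (Suc k)"
  shows "F n k = G n k"
  using assms by (induction n arbitrary: k) simp_all

definition ichoose :: "nat \<Rightarrow> int \<Rightarrow> int" where
  "ichoose m r = (if r < 0 then 0 else int (m choose nat r))"

lemma ichoose_Suc: "ichoose (Suc m) r = ichoose m (r - 1) + ichoose m r"
proof (cases "r > 0")
  case True
  then have "nat r = Suc (nat (r - 1))" by simp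
  with True show ?thesis by (simp add: ichoose_def)
qed (auto simp: ichoose_def)

lemma ichoose_symmetric: "ichoose m (int m - r) = ichoose m r"
proof (cases "0 \<le> r \<and> r \<le> int m")
  case True
  then have "m choose nat (int m - r) = m choose (m - nat r)"
    by (simp add: nat_diff_distrib)
  also have "\<dots> = m choose nat r"
    using True by (intro binomial_symmetric[symmetric]) linarith
  finally show ?thesis using True by (simp add: ichoose_def)
qed (auto simp: ichoose_def)

definition catalan_diff :: "nat \<Rightarrow> int \<Rightarrow> int" where
  "catalan_diff m r = ichoose m r - ichoose m (r - 1)"

lemma Cat_eq_catalan_diff: "b \<le> a \<Longrightarrow> Cat a b = catalan_diff (a + b) (int b)"
  by (simp add: Cat_def catalan_diff_def ichoose_def nat_diff_distrib)

lemma catalan_diff_Suc_Suc: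
  "catalan_diff (Suc (Suc m)) r = catalan_diff m (r - 2) + 2 * catalan_diff m (r - 1) + catalan_diff m r"
  by (simp add: catalan_diff_def ichoose_Suc algebra_simps)

lemma catalan_diff_reflect: "catalan_diff m (int m + 1 - r) = - catalan_diff m r"
  using ichoose_symmetric[of m r] ichoose_symmetric[of m "r - 1"]
  by (simp add: catalan_diff_def algebra_simps)

lemma catalan_diff_odd_row_recurrence:
  "catalan_diff (2 * Suc n + 1) (int (Suc n) - int k) =
     (if k = 0 then 0 else catalan_diff (2 * n + 1) (int n - int (k - 1)))
     + 2 * catalan_diff (2 * n + 1) (int n - int k)
     + catalan_diff (2 * n + 1) (int n - int (Suc k))"
proof -
  have "catalan_diff (2 * n + 1) (int n + 1) = 0"
    using catalan_diff_reflect[of "2 * n + 1" "int n + 1"] by simp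
  then show ?thesis
    using catalan_diff_Suc_Suc[of "2 * n + 1" "int n + 1 - int k"]
    by (simp add: of_nat_diff algebra_simps)
qed

lemma catalan_diff_even_row_recurrence:
  "catalan_diff (2 * Suc n) (int (Suc n) - int k) =
     (if k = 0 then 0 else catalan_diff (2 * n) (int n - int (k - 1)))
     + (if k = 0 then 1 else 2) * catalan_diff (2 * n) (int n - int k)
     + catalan_diff (2 * n) (int n - int (Suc k))"
proof -
  have "catalan_diff (2 * n) (int n + 1) = - catalan_diff (2 * n) (int n)"
    using catalan_diff_reflect[of "2 * n" "int n"] by simp
  then show ?thesis
    using catalan_diff_Suc_Suc[of "2 * n" "int n + 1 - int k"]
    by (simp add: of_nat_diff algebra_simps)
qed

lemma binomial_transform_Mot:
  "binomial_transform (\<lambda>j. int (Mot j k)) n = catalan_diff (2 * n + 1) (int n - int k)"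
proof (rule row_recurrence_unique[where w = "\<lambda>_. 2"])
  show "binomial_transform (\<lambda>j. int (Mot j k)) 0 = catalan_diff (2 * 0 + 1) (int 0 - int k)" for k
    by (simp add: binomial_transform_def Mot_0 catalan_diff_def ichoose_def)
  show "binomial_transform (\<lambda>j. int (Mot j k)) (Suc n) =
          (if k = 0 then 0 else binomial_transform (\<lambda>j. int (Mot j (k - 1))) n)
          + 2 * binomial_transform (\<lambda>j. int (Mot j k)) n
          + binomial_transform (\<lambda>j. int (Mot j (Suc k))) n" for n k
    using binomial_transform_row_recurrence[of "\<lambda>j k. int (Mot j k)" "\<lambda>_. 1"]
    by (simp add: Mot_Suc)
qed (rule catalan_diff_odd_row_recurrence)

lemma binomial_transform_Rior:
  "binomial_transform (\<lambda>j. int (Rior j k)) n = catalan_diff (2 * n) (int n - int k)"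
proof (rule row_recurrence_unique[where w = "\<lambda>k. if k = 0 then 1 else 2"])
  show "binomial_transform (\<lambda>j. int (Rior j k)) 0 = catalan_diff (2 * 0) (int 0 - int k)" for k
    by (simp add: binomial_transform_def Rior_0 catalan_diff_def ichoose_def)
  show "binomial_transform (\<lambda>j. int (Rior j k)) (Suc n) =
          (if k = 0 then 0 else binomial_transform (\<lambda>j. int (Rior j (k - 1))) n)
          + (if k = 0 then 1 else 2) * binomial_transform (\<lambda>j. int (Rior j k)) n
          + binomial_transform (\<lambda>j. int (Rior j (Suc k))) n" for n k
    using binomial_transform_row_recurrence[of "\<lambda>j k. int (Rior j k)" "\<lambda>k. if k = 0 then 0 else 1"]
    by (simp add: Rior_Suc)
qed (rule catalan_diff_even_row_recurrence)

lemma binomial_transform_eq_shifted_sum: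
  fixes f :: "nat \<Rightarrow> 'a::comm_semiring_1"
  assumes "s \<le> n" and "\<And>j. j < n - s \<Longrightarrow> f j = 0"
  shows "binomial_transform f n = (\<Sum>i = 0..s. f (i + n - s) * of_nat (n choose (s - i)))"
proof -
  have "binomial_transform f n = (\<Sum>j = n - s..n. of_nat (n choose j) * f j)"
    unfolding binomial_transform_def
    by (rule sum.mono_neutral_right) (use assms(2) in auto)
  also have "\<dots> = (\<Sum>i = 0..s. of_nat (n choose (i + (n - s))) * f (i + (n - s)))"
    using sum.shift_bounds_cl_nat_ivl[of "\<lambda>j. of_nat (n choose j) * f j" 0 "n - s" s] assms(1)
    by simp
  also have "\<dots> = (\<Sum>i = 0..s. f (i + n - s) * of_nat (n choose (s - i)))"
  proof (rule sum.cong)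
    fix i assume "i \<in> {0..s}"
    then have "n choose (i + (n - s)) = n choose (s - i)" "i + (n - s) = i + n - s"
      using assms(1) binomial_symmetric[of "i + (n - s)" n] by auto
    then show "of_nat (n choose (i + (n - s))) * f (i + (n - s))
                 = f (i + n - s) * of_nat (n choose (s - i))"
      by (simp add: mult.commute)
  qed simp
  finally show ?thesis .
qed

theorem proposition5p15:
  fixes n s :: nat
  assumes "s \<le> n"
  shows "Cat (2 * n + 1 - s) s =
           (\<Sum>i = 0..s. int (Mot (i + n - s) (n - s)) * int (n choose (s - i)))
       \<and> Cat (2 * n - s) s =
           (\<Sum>i = 0..s. int (Rior (i + n - s) (n - s)) * int (n choose (s - i)))"
proof
  have "int n - int (n - s) = int s" using assms by simp
  then have "Cat (2 * n + 1 - s) s = binomial_transform (\<lambda>j. int (Mot j (n - s))) n"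
    and "Cat (2 * n - s) s = binomial_transform (\<lambda>j. int (Rior j (n - s))) n"
    using assms by (simp_all add: binomial_transform_Mot binomial_transform_Rior Cat_eq_catalan_diff)
  then show "Cat (2 * n + 1 - s) s =
           (\<Sum>i = 0..s. int (Mot (i + n - s) (n - s)) * int (n choose (s - i)))"
    and "Cat (2 * n - s) s =
           (\<Sum>i = 0..s. int (Rior (i + n - s) (n - s)) * int (n choose (s - i)))"
    using assms by (simp_all add: binomial_transform_eq_shifted_sum Mot_eq_0 Rior_eq_0)
qed

end
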